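(* For $r>0$ let $\mathcal{A}_r\subset\mathbb{R}^2$ be the closed rectangle with vertices $(\pm\sqrt{e^{2r}-1},e^r)$ and $(\pm\sqrt{e^{2r}-1},e^{-r})$, and let $\mathcal{C}_r$ be the closed rectangle with vertices $(e^r,\pm\sqrt{e^{2r}-1})$ and $(e^{-r},\pm\sqrt{e^{2r}-1})$. Then for any $0<r<\log 1.01$ and any $\Lambda\in K_r$, we have $\Lambda_{\mathrm{pr}}\cap(\mathcal{A}_r\cup\mathcal{C}_r)\ne\varnothing$.
   Context: $X=\mathrm{SL}_2(\mathbb{R})/\mathrm{SL}_2(\mathbb{Z})$ is the space of unimodular lattices in $\mathbb{R}^2$. $\|\cdot\|$ is the supremum norm on $\mathbb{R}^2$. For $\Lambda\in X$ let $\Delta(\Lambda)=\sup_{v\in\Lambda\smallsetminus\{0\}}\log(1/\|v\|)$, and for $r\ge0$ let $K_r=\Delta^{-1}([0,r])$. $\Lambda_{\mathrm{pr}}$ denotes the set of primitive vectors of $\Lambda$. *)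

theory Defs
  imports "HOL-Analysis.Analysis"
begin

definition supnorm :: "real \<times> real \<Rightarrow> real" where
  "supnorm v = max \<bar>fst v\<bar> \<bar>snd v\<bar>"

text \<open>A unimodular lattice: the integer span of the columns of a matrix in SL_2(R).\<close>
definition unimodular_lattice :: "(real \<times> real) set \<Rightarrow> bool" where
  "unimodular_lattice L \<longleftrightarrow>
     (\<exists>u w. fst u * snd w - snd u * fst w = 1 \<and>
        L = {of_int a *\<^sub>R u + of_int b *\<^sub>R w | a b. True})"

definition Delta :: "(real \<times> real) set \<Rightarrow> real" where
  "Delta L = (SUP v\<in>L - {0}. ln (1 / supnorm v))"

definition K :: "real \<Rightarrow> (real \<times> real) set set" where
  "K r = {L. unimodular_lattice L \<and> 0 \<le> Delta L \<and> Delta L \<le> r}"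

definition primitive_vectors :: "(real \<times> real) set \<Rightarrow> (real \<times> real) set" where
  "primitive_vectors L =
     {v \<in> L. v \<noteq> 0 \<and> (\<forall>w\<in>L. \<forall>k::int. v = of_int k *\<^sub>R w \<longrightarrow> \<bar>k\<bar> = 1)}"

definition rectA :: "real \<Rightarrow> (real \<times> real) set" where
  "rectA r = {(x, y). \<bar>x\<bar> \<le> sqrt (exp (2 * r) - 1) \<and> exp (- r) \<le> y \<and> y \<le> exp r}"

definition rectC :: "real \<Rightarrow> (real \<times> real) set" where
  "rectC r = {(x, y). exp (- r) \<le> x \<and> x \<le> exp r \<and> \<bar>y\<bar> \<le> sqrt (exp (2 * r) - 1)}"

end

theory Submission
  imports Defs
begin

(* A lattice in K_r contains a vector v with exp(-r) <= |v| < exp r; as exp r < 2 exp(-r), no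
   proper multiple of a lattice vector is that short, so v is primitive and extends to a basis
   (v, p).  The symmetries of the square preserve the sup norm and, up to sign, the union of the
   two rectangles, so one may assume v = (a, b) with 0 <= a <= b.  If a <= sqrt(exp(2r) - 1),
   then v lies in A_r.  Otherwise the vectors p + k v run along the line a y - b x = 1 with
   heights spaced b apart; the first of them above height max(-s, (1 - b exp r) / a) is below
   height exp(-r), so the lower bound on the lattice forces x <= -exp(-r), and its negative
   lies in C_r. *)

definition det2 :: "real \<times> real \<Rightarrow> real \<times> real \<Rightarrow> real" where
  "det2 p q = fst p * snd q - snd p * fst q"

lemma lattice_line_meets_rectC:
  fixes a b r :: real
  assumes small: "sqrt (exp (2 * r) - 1) < exp (- r)"
    and det: "det2 (a, b) p = 1"
    and a: "sqrt (exp (2 * r) - 1) < a" "a \<le> b"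
    and b: "exp (- r) \<le> b" "b < exp r"
    and lower: "\<And>k::int. exp (- r) \<le> supnorm (p + of_int k *\<^sub>R (a, b))"
  shows "\<exists>k::int. - (p + of_int k *\<^sub>R (a, b)) \<in> rectC r"
proof -
  define s where "s = sqrt (exp (2 * r) - 1)"
  define d where "d = exp (- r)"
  define D where "D = exp r"
  have "0 < r" using b exp_less_cancel_iff[of "- r" r] by linarith
  have Dd: "D * d = 1" unfolding D_def d_def by (simp add: exp_minus)
  have "0 < d" "d < 1" "1 < D" unfolding d_def D_def using \<open>0 < r\<close> by auto
  have s_sq: "s\<^sup>2 = D\<^sup>2 - 1" and "0 \<le> s"
    unfolding s_def D_def using \<open>0 < r\<close> by (simp_all add: exp_double)
  have "s < d" "s < a" "a < D" "0 < a" "0 < b"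
    using small a b \<open>0 \<le> s\<close> unfolding s_def d_def D_def by linarith+
  have D_minus_d: "D - d \<le> s"
  proof (rule power2_le_imp_le)
    have "d\<^sup>2 \<le> 1" using \<open>0 < d\<close> \<open>d < 1\<close> by (simp add: power_le_one)
    then show "(D - d)\<^sup>2 \<le> s\<^sup>2" using Dd s_sq by (simp add: power2_diff)
  qed fact
  have low_end: "(1 - b * D) / a \<le> d - b"
  proof -
    have "0 \<le> (b - d) * (D - a)" using b \<open>a < D\<close> unfolding d_def by simp
    then have "1 - b * D \<le> (d - b) * a" using Dd by (simp add: algebra_simps)
    then show ?thesis using \<open>0 < a\<close> by (simp add: pos_divide_le_eq)
  qed
  have high_end: "1 - b * d \<le> a * s"
  proof -
    have "d * d \<le> b * d" using b \<open>0 < d\<close> unfolding d_def by simp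
    moreover have "s * s \<le> a * s" using \<open>s < a\<close> \<open>0 \<le> s\<close> by (simp add: mult_right_mono)
    moreover have "2 * (D * d) \<le> D * D + d * d" using sum_squares_ge_zero[of "D - d" 0]
      by (simp add: algebra_simps power2_eq_square)
    ultimately show ?thesis using Dd s_sq by (simp add: power2_eq_square)
  qed
  obtain c e where p: "p = (c, e)" by (cases p)
  define lo where "lo = max (- s) ((1 - b * D) / a)"
  define k where "k = \<lceil>(lo - e) / b\<rceil>"
  define x where "x = c + k * a"
  define y where "y = e + k * b"
  have q: "p + of_int k *\<^sub>R (a, b) = (x, y)" unfolding p x_def y_def by simp
  have line: "a * y - b * x = 1"
    using det unfolding det2_def p x_def y_def by (simp add: algebra_simps)
  have "lo \<le> y"
  proof -
    have "(lo - e) / b \<le> k" unfolding k_def by (rule le_of_int_ceiling)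
    then show ?thesis using \<open>0 < b\<close> unfolding y_def by (simp add: pos_divide_le_eq)
  qed
  have "y < lo + b"
  proof -
    have "k < (lo - e) / b + 1" unfolding k_def by linarith
    then show ?thesis using \<open>0 < b\<close> unfolding y_def by (simp add: field_simps)
  qed
  then have "y < d" using D_minus_d low_end b unfolding lo_def D_def by linarith
  have "x \<le> - d"
  proof (rule ccontr)
    assume "\<not> x \<le> - d"
    moreover have "b * x < 0"
      using line \<open>y < d\<close> \<open>0 < a\<close> \<open>a < D\<close> \<open>0 < d\<close> Dd
        mult_strict_left_mono[of y d a] mult_strict_right_mono[of a D d] by linarith
    moreover have "- d < y" using \<open>lo \<le> y\<close> \<open>s < d\<close> unfolding lo_def by linarith
    ultimately have "supnorm (x, y) < d"
      using \<open>y < d\<close> \<open>0 < b\<close> unfolding supnorm_def by (auto simp: mult_less_0_iff)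
    then show False using lower[of k] unfolding q d_def by linarith
  qed
  have "y \<le> s"
  proof -
    have "a * y \<le> a * s"
      using line high_end \<open>x \<le> - d\<close> \<open>0 < b\<close> mult_left_mono[of x "- d" b] by linarith
    then show ?thesis using \<open>0 < a\<close> by simp
  qed
  have "- x \<le> D"
  proof -
    have "1 - b * D \<le> a * y"
      using \<open>lo \<le> y\<close> \<open>0 < a\<close> unfolding lo_def by (simp add: pos_divide_le_eq mult.commute)
    then have "b * (- x) \<le> b * D" using line by linarith
    then show ?thesis using \<open>0 < b\<close> by (metis mult_le_cancel_left_pos)
  qed
  have "- (x, y) \<in> rectC r"
    using \<open>x \<le> - d\<close> \<open>- x \<le> D\<close> \<open>y \<le> s\<close> \<open>lo \<le> y\<close>
    unfolding rectC_def s_def d_def D_def lo_def by auto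
  then show ?thesis unfolding q[symmetric] by blast
qed

lemma small_r_bounds:
  assumes "exp r < 101 / 100"
  shows "sqrt (exp (2 * r) - 1) < exp (- r)" "exp r < 2 * exp (- r)"
proof -
  define D where "D = exp r"
  have "0 < D" unfolding D_def by simp
  have "D * D < 2" using assms mult_strict_mono[of D "101/100" D "101/100"] \<open>0 < D\<close>
    unfolding D_def by simp
  then show "exp r < 2 * exp (- r)"
    using \<open>0 < D\<close> unfolding D_def by (simp add: exp_minus field_simps)
  have "D\<^sup>2 - 1 < (1 / D)\<^sup>2"
  proof -
    have "D\<^sup>2 - 1 < 1 / 2"
      using assms \<open>D * D < 2\<close> mult_strict_mono[of D "101/100" D "101/100"] \<open>0 < D\<close>
      unfolding D_def by (simp add: power2_eq_square)
    also have "\<dots> < (1 / D)\<^sup>2"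
      using \<open>D * D < 2\<close> \<open>0 < D\<close> by (simp add: power_divide power2_eq_square field_simps)
    finally show ?thesis .
  qed
  then have "sqrt (D\<^sup>2 - 1) < sqrt ((1 / D)\<^sup>2)" by (rule real_sqrt_less_mono)
  then show "sqrt (exp (2 * r) - 1) < exp (- r)"
    using \<open>0 < D\<close> unfolding D_def by (simp add: exp_double exp_minus inverse_eq_divide)
qed

definition lat :: "real \<times> real \<Rightarrow> real \<times> real \<Rightarrow> (real \<times> real) set" where
  "lat u w = {of_int a *\<^sub>R u + of_int b *\<^sub>R w | a b. True}"

lemma supnorm_nonneg: "0 \<le> supnorm z"
  unfolding supnorm_def by auto

lemma supnorm_eq_0_iff: "supnorm z = 0 \<longleftrightarrow> z = 0"
  unfolding supnorm_def by (cases z) (auto simp: zero_prod_def max_def)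

lemma supnorm_pos: "z \<noteq> 0 \<Longrightarrow> 0 < supnorm z"
  using supnorm_nonneg supnorm_eq_0_iff by (metis order_le_less)

lemma supnorm_scaleR: "supnorm (c *\<^sub>R z) = \<bar>c\<bar> * supnorm z"
  unfolding supnorm_def by (simp add: abs_mult max_mult_distrib_left)

lemma supnorm_uminus: "supnorm (- z) = supnorm z"
  unfolding supnorm_def by simp

lemma abs_det2_le: "\<bar>det2 p q\<bar> \<le> 2 * supnorm p * supnorm q"
proof -
  have "\<bar>det2 p q\<bar> \<le> \<bar>fst p\<bar> * \<bar>snd q\<bar> + \<bar>snd p\<bar> * \<bar>fst q\<bar>"
    unfolding det2_def by (simp add: abs_mult[symmetric])
  also have "\<dots> \<le> supnorm p * supnorm q + supnorm p * supnorm q"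
    unfolding supnorm_def by (intro add_mono mult_mono) auto
  finally show ?thesis by simp
qed

lemma det2_antisym: "det2 p q = - det2 q p"
  unfolding det2_def by simp

lemma det2_zero_right: "det2 v 0 = 0"
  unfolding det2_def by simp

lemma det2_lin:
  "det2 (of_int a *\<^sub>R u + of_int b *\<^sub>R w) (of_int c *\<^sub>R u + of_int d *\<^sub>R w)
     = of_int (a * d - b * c) * det2 u w"
  unfolding det2_def by (simp add: algebra_simps)

lemma det2_add_scaleR_right: "det2 v (p + c *\<^sub>R v) = det2 v p"
  unfolding det2_def by (simp add: algebra_simps)

lemma lat_iff: "z \<in> lat u w \<longleftrightarrow> (\<exists>a b::int. z = of_int a *\<^sub>R u + of_int b *\<^sub>R w)"
  unfolding lat_def by auto

lemma lat_basis: "u \<in> lat u w"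
  unfolding lat_iff by (rule exI[of _ 1], rule exI[of _ 0]) simp

lemma lat_add:
  assumes "z \<in> lat u w" "z' \<in> lat u w"
  shows "z + z' \<in> lat u w"
proof -
  obtain a b a' b' :: int where "z = of_int a *\<^sub>R u + of_int b *\<^sub>R w"
    "z' = of_int a' *\<^sub>R u + of_int b' *\<^sub>R w"
    using assms unfolding lat_iff by blast
  then have "z + z' = of_int (a + a') *\<^sub>R u + of_int (b + b') *\<^sub>R w"
    by (simp add: algebra_simps)
  then show ?thesis unfolding lat_iff by blast
qed

lemma lat_scaleR_int:
  assumes "z \<in> lat u w"
  shows "of_int k *\<^sub>R z \<in> lat u w"
proof -
  obtain a b :: int where "z = of_int a *\<^sub>R u + of_int b *\<^sub>R w"
    using assms unfolding lat_iff by blast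
  then have "of_int k *\<^sub>R z = of_int (k * a) *\<^sub>R u + of_int (k * b) *\<^sub>R w"
    by (simp add: algebra_simps)
  then show ?thesis unfolding lat_iff by blast
qed

lemma lat_uminus: "z \<in> lat u w \<Longrightarrow> - z \<in> lat u w"
  using lat_scaleR_int[of z u w "-1"] by simp

lemma det2_lat_Ints:
  assumes "det2 u w = 1" "z \<in> lat u w" "z' \<in> lat u w"
  shows "det2 z z' \<in> \<int>"
proof -
  obtain a b a' b' :: int where "z = of_int a *\<^sub>R u + of_int b *\<^sub>R w"
    "z' = of_int a' *\<^sub>R u + of_int b' *\<^sub>R w"
    using assms(2,3) unfolding lat_iff by blast
  then show ?thesis using assms(1) det2_lin[of a u b w a' b'] by simp
qed

lemma lat_primitive:
  assumes "det2 u w = 1" "q \<in> lat u w" "z \<in> lat u w" "\<bar>det2 z q\<bar> = 1"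
  shows "q \<in> primitive_vectors (lat u w)"
  unfolding primitive_vectors_def
proof (intro CollectI conjI ballI allI impI)
  show "q \<in> lat u w" by fact
  show "q \<noteq> 0" using assms(4) by (auto simp: det2_def)
  fix z' k assume z': "z' \<in> lat u w" and q: "q = of_int k *\<^sub>R z'"
  obtain n :: int where n: "det2 z z' = of_int n"
    using det2_lat_Ints[OF assms(1,3) z'] by (auto elim: Ints_cases)
  have "det2 z q = of_int k * det2 z z'"
    unfolding q det2_def by (simp add: algebra_simps)
  then have "det2 z q = of_int (k * n)" using n by simp
  then have "\<bar>k * n\<bar> = 1" using assms(4) by linarith
  then show "\<bar>k\<bar> = 1" by (rule abs_zmult_eq_1)
qed

lemma primitive_vectors_uminus:
  assumes "\<And>z. z \<in> L \<Longrightarrow> - z \<in> L" "q \<in> primitive_vectors L"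
  shows "- q \<in> primitive_vectors L"
  unfolding primitive_vectors_def
proof (intro CollectI conjI ballI allI impI)
  show "- q \<in> L" "- q \<noteq> 0" using assms by (auto simp: primitive_vectors_def)
  fix z k assume "z \<in> L" "- q = of_int k *\<^sub>R z"
  then have "q = of_int (- k) *\<^sub>R z" by (simp add: minus_equation_iff[of q])
  then show "\<bar>k\<bar> = 1"
    using assms(2) \<open>z \<in> L\<close> unfolding primitive_vectors_def by fastforce
qed

lemma lat_supnorm_lower:
  assumes "det2 u w = 1"
  shows "\<exists>M>0. \<forall>z\<in>lat u w. z \<noteq> 0 \<longrightarrow> M \<le> supnorm z"
proof -
  define N where "N = supnorm u + supnorm w"
  have "u \<noteq> 0" using assms by (auto simp: det2_def)
  then have N: "0 < N"
    unfolding N_def using supnorm_pos[of u] supnorm_nonneg[of w] by simp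
  have "1 / (2 * N) \<le> supnorm z" if z_lat: "z \<in> lat u w" and "z \<noteq> 0" for z
  proof -
    obtain a b :: int where z: "z = of_int a *\<^sub>R u + of_int b *\<^sub>R w"
      using z_lat unfolding lat_iff by auto
    with \<open>z \<noteq> 0\<close> have "a \<noteq> 0 \<or> b \<noteq> 0" by auto
    moreover have "det2 z w = of_int a" "det2 u z = of_int b"
      using assms unfolding z det2_def by (simp_all add: algebra_simps)
    ultimately have "1 \<le> \<bar>det2 z w\<bar> \<or> 1 \<le> \<bar>det2 u z\<bar>" by auto
    then have "1 \<le> 2 * supnorm z * N"
      using abs_det2_le[of z w] abs_det2_le[of u z] supnorm_nonneg[of z]
      unfolding N_def by (auto simp: algebra_simps)
    then show ?thesis
      using N by (simp add: divide_le_eq mult.commute mult.left_commute)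
  qed
  moreover have "0 < 1 / (2 * N)" using N by simp
  ultimately show ?thesis by blast
qed

lemma lat_short_vector_completes:
  assumes uw: "det2 u w = 1" and v: "v \<in> lat u w" "v \<noteq> 0"
    and short: "\<And>z. z \<in> lat u w \<Longrightarrow> z \<noteq> 0 \<Longrightarrow> supnorm v < 2 * supnorm z"
  shows "\<exists>p\<in>lat u w. det2 v p = 1"
proof -
  obtain \<alpha> \<beta> :: int where v_eq: "v = of_int \<alpha> *\<^sub>R u + of_int \<beta> *\<^sub>R w"
    using v unfolding lat_iff by blast
  define g where "g = gcd \<alpha> \<beta>"
  obtain \<alpha>' \<beta>' where \<alpha>: "\<alpha> = g * \<alpha>'" and \<beta>: "\<beta> = g * \<beta>'"
    unfolding g_def by (meson dvd_def gcd_dvd1 gcd_dvd2)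
  define v' where "v' = of_int \<alpha>' *\<^sub>R u + of_int \<beta>' *\<^sub>R w"
  have "v' \<in> lat u w" unfolding v'_def lat_iff by blast
  have v_v': "v = of_int g *\<^sub>R v'"
    unfolding v_eq v'_def \<alpha> \<beta> by (simp add: algebra_simps)
  have "g = 1"
  proof (rule ccontr)
    assume "g \<noteq> 1"
    moreover have "0 \<le> g" unfolding g_def by simp
    ultimately have "2 \<le> \<bar>g\<bar>" using v(2) v_v' by fastforce
    moreover have "v' \<noteq> 0" using v(2) v_v' by auto
    ultimately have "2 * supnorm v' \<le> supnorm v"
      using v_v' supnorm_nonneg[of v'] by (simp add: supnorm_scaleR mult_right_mono)
    then show False using short[OF \<open>v' \<in> lat u w\<close> \<open>v' \<noteq> 0\<close>] by simp
  qed
  then obtain x y :: int where xy: "x * \<alpha> + y * \<beta> = 1"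
    using bezout_int[of \<alpha> \<beta>] unfolding g_def by metis
  define p where "p = of_int (- y) *\<^sub>R u + of_int x *\<^sub>R w"
  have "p \<in> lat u w" unfolding p_def lat_iff by blast
  moreover have "det2 v p = 1"
    unfolding v_eq p_def det2_lin uw using xy by (simp add: algebra_simps)
  ultimately show ?thesis by blast
qed

lemma bdd_above_Delta_image:
  assumes "det2 u w = 1"
  shows "bdd_above ((\<lambda>v. ln (1 / supnorm v)) ` (lat u w - {0}))"
proof -
  obtain M where M: "0 < M" "\<And>z. z \<in> lat u w \<Longrightarrow> z \<noteq> 0 \<Longrightarrow> M \<le> supnorm z"
    using lat_supnorm_lower[OF assms] by blast
  show ?thesis
  proof (rule bdd_aboveI2)
    fix z assume "z \<in> lat u w - {0}"
    then have "M \<le> supnorm z" using M(2) by blast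
    then show "ln (1 / supnorm z) \<le> ln (1 / M)" using M(1) by (simp add: frac_le)
  qed
qed

lemma ln_inverse_supnorm_le_iff:
  "z \<noteq> 0 \<Longrightarrow> ln (1 / supnorm z) \<le> r \<longleftrightarrow> exp (- r) \<le> supnorm z"
  using supnorm_pos[of z] by (auto simp: ln_div ln_ge_iff[symmetric])

lemma Delta_le_imp_supnorm_ge:
  assumes "det2 u w = 1" "Delta (lat u w) \<le> r" "z \<in> lat u w" "z \<noteq> 0"
  shows "exp (- r) \<le> supnorm z"
proof -
  have "ln (1 / supnorm z) \<le> Delta (lat u w)"
    unfolding Delta_def using assms(3,4) bdd_above_Delta_image[OF assms(1)]
    by (intro cSUP_upper) auto
  then show ?thesis using assms(2,4) ln_inverse_supnorm_le_iff by fastforce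
qed

lemma Delta_gt_imp_supnorm_lt:
  assumes "det2 u w = 1" "- r < Delta (lat u w)"
  shows "\<exists>v\<in>lat u w. v \<noteq> 0 \<and> supnorm v < exp r"
proof -
  have "u \<in> lat u w - {0}" using assms(1) lat_basis by (auto simp: det2_def)
  then obtain v where "v \<in> lat u w - {0}" "- r < ln (1 / supnorm v)"
    using assms(2) less_cSUP_iff[OF _ bdd_above_Delta_image[OF assms(1)]]
    unfolding Delta_def by blast
  moreover from this have "supnorm v < exp r"
    using ln_inverse_supnorm_le_iff[of v "- r"] by auto
  ultimately show ?thesis by blast
qed

(* Primitive vectors come in pairs +-q, so it suffices to hit the symmetrised target, which
   unlike rectA r \<union> rectC r is invariant under all symmetries of the square. *)
definition sym_rects :: "real \<Rightarrow> (real \<times> real) set" where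
  "sym_rects r = {z. z \<in> rectA r \<union> rectC r \<or> - z \<in> rectA r \<union> rectC r}"

definition short_basis :: "real \<Rightarrow> real \<times> real \<Rightarrow> real \<times> real \<Rightarrow> bool" where
  "short_basis r v p \<longleftrightarrow> \<bar>det2 v p\<bar> = 1 \<and> exp (- r) \<le> supnorm v \<and> supnorm v < exp r \<and>
     (\<forall>k::int. exp (- r) \<le> supnorm (p + of_int k *\<^sub>R v))"

definition meets_sym_rects :: "real \<Rightarrow> real \<times> real \<Rightarrow> real \<times> real \<Rightarrow> bool" where
  "meets_sym_rects r v p \<longleftrightarrow> v \<in> sym_rects r \<or> (\<exists>k::int. p + of_int k *\<^sub>R v \<in> sym_rects r)"

definition flip_fst :: "real \<times> real \<Rightarrow> real \<times> real" where
  "flip_fst z = (- fst z, snd z)"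

lemma short_basis_map:
  assumes "linear g" "\<And>z. supnorm (g z) = supnorm z"
    "\<And>z z'. \<bar>det2 (g z) (g z')\<bar> = \<bar>det2 z z'\<bar>"
  shows "short_basis r (g v) (g p) \<longleftrightarrow> short_basis r v p"
  using assms by (simp add: short_basis_def flip: linear_add[OF assms(1)] linear_scale[OF assms(1)])

lemma meets_sym_rects_map:
  assumes "linear g" "\<And>z. g z \<in> sym_rects r \<longleftrightarrow> z \<in> sym_rects r"
  shows "meets_sym_rects r (g v) (g p) \<longleftrightarrow> meets_sym_rects r v p"
  using assms by (simp add: meets_sym_rects_def flip: linear_add[OF assms(1)] linear_scale[OF assms(1)])

lemma sym_rects_uminus: "- z \<in> sym_rects r \<longleftrightarrow> z \<in> sym_rects r"
  unfolding sym_rects_def by auto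

lemma uminus_add_scaleR_int:
  fixes p v :: "real \<times> real"
  shows "- p + of_int k *\<^sub>R v = - (p + of_int (- k) *\<^sub>R v)"
  by (simp add: algebra_simps)

lemma short_basis_uminus_right: "short_basis r v (- p) \<longleftrightarrow> short_basis r v p"
proof -
  have "\<bar>det2 v (- p)\<bar> = \<bar>det2 v p\<bar>" by (simp add: det2_def)
  then show ?thesis
    unfolding short_basis_def uminus_add_scaleR_int supnorm_uminus
    by (metis minus_minus)
qed

lemma meets_sym_rects_uminus_right: "meets_sym_rects r v (- p) \<longleftrightarrow> meets_sym_rects r v p"
  unfolding meets_sym_rects_def uminus_add_scaleR_int sym_rects_uminus
  by (metis minus_minus)

lemma sym_rects_swap: "prod.swap z \<in> sym_rects r \<longleftrightarrow> z \<in> sym_rects r"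
  unfolding sym_rects_def rectA_def rectC_def by (cases z) auto

lemma sym_rects_flip_fst: "flip_fst z \<in> sym_rects r \<longleftrightarrow> z \<in> sym_rects r"
  unfolding sym_rects_def rectA_def rectC_def flip_fst_def by (cases z) auto

lemma linear_flip_fst: "linear flip_fst"
  unfolding flip_fst_def by (auto simp: linear_iff)

lemma linear_swap: "linear (prod.swap :: real \<times> real \<Rightarrow> real \<times> real)"
  by (auto simp: linear_iff)

lemma supnorm_flip_fst: "supnorm (flip_fst z) = supnorm z"
  unfolding supnorm_def flip_fst_def by simp

lemma supnorm_swap: "supnorm (prod.swap z) = supnorm z"
  unfolding supnorm_def by (simp add: max.commute)

lemma det2_flip_fst: "det2 (flip_fst z) (flip_fst z') = - det2 z z'"
  unfolding det2_def flip_fst_def by simp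

lemma det2_swap: "det2 (prod.swap z) (prod.swap z') = - det2 z z'"
  unfolding det2_def by simp

lemma det2_uminus: "det2 (- z) (- z') = det2 z z'"
  unfolding det2_def by simp

lemma short_basis_meets_sym_rects_octant:
  assumes small: "sqrt (exp (2 * r) - 1) < exp (- r)"
    and basis: "short_basis r v p" and v: "0 \<le> fst v" "fst v \<le> snd v"
  shows "meets_sym_rects r v p"
proof -
  obtain a b where v_eq: "v = (a, b)" by (cases v)
  have "supnorm v = b" using v unfolding v_eq supnorm_def by auto
  with basis have b: "exp (- r) \<le> b" "b < exp r" by (auto simp: short_basis_def)
  show ?thesis
  proof (cases "a \<le> sqrt (exp (2 * r) - 1)")
    case True
    then have "v \<in> rectA r" using b v unfolding v_eq rectA_def by auto
    then show ?thesis unfolding meets_sym_rects_def sym_rects_def by blast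
  next
    case False
    have "meets_sym_rects r v q" if "det2 v q = 1" "short_basis r v q" for q
    proof -
      have "\<exists>k::int. - (q + of_int k *\<^sub>R (a, b)) \<in> rectC r"
        by (rule lattice_line_meets_rectC[OF small])
          (use that False b v in \<open>auto simp: v_eq short_basis_def\<close>)
      then obtain k :: int where "- (q + of_int k *\<^sub>R v) \<in> rectC r" using v_eq by blast
      then show ?thesis unfolding meets_sym_rects_def sym_rects_def by blast
    qed
    moreover have "det2 v p = 1 \<or> det2 v (- p) = 1"
      using basis by (auto simp: short_basis_def det2_def abs_if split: if_splits)
    ultimately show ?thesis
      using basis short_basis_uminus_right meets_sym_rects_uminus_right by metis
  qed
qed

lemma short_basis_meets_sym_rects:
  assumes small: "sqrt (exp (2 * r) - 1) < exp (- r)" and "short_basis r v p"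
  shows "meets_sym_rects r v p"
proof -
  have quadrant: "meets_sym_rects r v p" if "short_basis r v p" "\<bar>fst v\<bar> \<le> snd v" for v p
  proof (cases "0 \<le> fst v")
    case True
    then show ?thesis using short_basis_meets_sym_rects_octant[OF small] that by auto
  next
    case False
    have "short_basis r (flip_fst v) (flip_fst p)"
      using that(1) short_basis_map[OF linear_flip_fst supnorm_flip_fst] by (simp add: det2_flip_fst)
    then have "meets_sym_rects r (flip_fst v) (flip_fst p)"
      using short_basis_meets_sym_rects_octant[OF small] that(2) False by (auto simp: flip_fst_def)
    then show ?thesis using meets_sym_rects_map[OF linear_flip_fst sym_rects_flip_fst] by blast
  qed
  have half: "meets_sym_rects r v p" if "short_basis r v p" "\<bar>fst v\<bar> \<le> \<bar>snd v\<bar>" for v p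
  proof (cases "0 \<le> snd v")
    case True
    then show ?thesis using quadrant that by auto
  next
    case False
    have "short_basis r (- v) (- p)"
      using that(1) short_basis_map[OF linear_uminus supnorm_uminus] by (simp add: det2_uminus)
    then have "meets_sym_rects r (- v) (- p)" using quadrant that(2) False by auto
    then show ?thesis using meets_sym_rects_map[OF linear_uminus sym_rects_uminus] by blast
  qed
  show ?thesis
  proof (cases "\<bar>fst v\<bar> \<le> \<bar>snd v\<bar>")
    case True
    then show ?thesis using half assms(2) by blast
  next
    case False
    have "short_basis r (prod.swap v) (prod.swap p)"
      using assms(2) short_basis_map[OF linear_swap supnorm_swap] by (simp add: det2_swap)
    then have "meets_sym_rects r (prod.swap v) (prod.swap p)" using half False by (auto simp: prod.swap_def)
    then show ?thesis using meets_sym_rects_map[OF linear_swap sym_rects_swap] by blast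
  qed
qed

theorem lemma3p1:
  fixes r :: real and L :: "(real \<times> real) set"
  assumes "0 < r" and "r < ln (101 / 100)" and "L \<in> K r"
  shows "primitive_vectors L \<inter> (rectA r \<union> rectC r) \<noteq> {}"
proof -
  have "exp r < 101 / 100" using assms(2) exp_less_cancel_iff[of r "ln (101 / 100)"] by simp
  note bounds = small_r_bounds[OF this]
  obtain u w where uw: "det2 u w = 1" and L: "L = lat u w"
    using assms(3) unfolding K_def unimodular_lattice_def det2_def lat_def by blast
  have Delta: "0 \<le> Delta L" "Delta L \<le> r" using assms(3) unfolding K_def by auto
  have lower: "exp (- r) \<le> supnorm z" if "z \<in> L" "z \<noteq> 0" for z
    using Delta_le_imp_supnorm_ge[OF uw] Delta that unfolding L by blast
  have "- r < Delta (lat u w)" using Delta assms(1) unfolding L by linarith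
  then obtain v where v: "v \<in> L" "v \<noteq> 0" "supnorm v < exp r"
    using Delta_gt_imp_supnorm_lt[OF uw] unfolding L by blast
  have short: "supnorm v < 2 * supnorm z" if "z \<in> L" "z \<noteq> 0" for z
    using lower[OF that] v(3) bounds(2) by linarith
  obtain p where p: "p \<in> L" "det2 v p = 1"
    using lat_short_vector_completes[OF uw] v(1,2) short unfolding L by blast
  have line: "p + of_int k *\<^sub>R v \<in> L" "det2 v (p + of_int k *\<^sub>R v) = 1" for k
    using p v lat_add lat_scaleR_int det2_add_scaleR_right unfolding L by auto
  have line_nonzero: "p + of_int k *\<^sub>R v \<noteq> 0" for k
    using line(2)[of k] det2_zero_right[of v] by (metis zero_neq_one)
  have "short_basis r v p"
    unfolding short_basis_def using lower v p line(1) line_nonzero by auto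
  then have "meets_sym_rects r v p" by (rule short_basis_meets_sym_rects[OF bounds(1)])
  moreover have "v \<in> primitive_vectors L"
    using lat_primitive[OF uw, of v p] v p det2_antisym[of p v] unfolding L by simp
  moreover have "p + of_int k *\<^sub>R v \<in> primitive_vectors L" for k
    using lat_primitive[OF uw] line v unfolding L by simp
  ultimately obtain q where q: "q \<in> primitive_vectors L" "q \<in> sym_rects r"
    unfolding meets_sym_rects_def by blast
  moreover have "- q \<in> primitive_vectors L"
    using primitive_vectors_uminus[OF lat_uminus q(1)[unfolded L]] unfolding L .
  ultimately show ?thesis unfolding sym_rects_def by blast
qed

end
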